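(* Let $k\ge2$ and $\sigma_i=\frac{i(k-i)}2$ for $i=0,\dots,k$. For $\boldsymbol\xi=(\xi_1,\dots,\xi_k)\in\mathbb{R}^k$ set $b_1=b_{k+1}=0$ and $b_i=\sigma_{i-1}\big(e^{-(\xi_i-\xi_{i-1})}-1\big)$ for $i=2,\dots,k$, and consider the system $\dot\xi_i=b_i-b_{i+1}$, $i=1,\dots,k$. Then: (a) the only critical point of this system on the hyperplane $\{\sum_{i=1}^k\xi_i=0\}$ is $\boldsymbol\xi=0$; (b) for any solution $\boldsymbol\xi(\tau)$ on its maximal interval $[0,\tau_\infty)$ with $\sum_{i=1}^k\xi_i(0)=0$, the functions $B(\tau)=\max\{b_i(\tau):1\le i\le k+1\}$ and $-b(\tau)$, where $b(\tau)=\min\{b_i(\tau):1\le i\le k+1\}$, are nonincreasing in $\tau$; moreover $B-b$ is strictly decreasing, unless $\xi_1\equiv\dots\equiv\xi_k\equiv0$. *)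

theory Defs
  imports "HOL-Analysis.Analysis"
begin

text \<open>Vectors \<xi> = (\<xi>_1,...,\<xi>_k) in R^k are represented as functions nat => real,
  only the values at indices 1..k being relevant.\<close>

definition sigma :: "nat \<Rightarrow> nat \<Rightarrow> real" where
  "sigma k i = real i * (real k - real i) / 2"

definition bcoef :: "nat \<Rightarrow> (nat \<Rightarrow> real) \<Rightarrow> nat \<Rightarrow> real" where
  "bcoef k \<xi> i =
     (if 2 \<le> i \<and> i \<le> k then sigma k (i - 1) * (exp (- (\<xi> i - \<xi> (i - 1))) - 1) else 0)"

definition vfield :: "nat \<Rightarrow> (nat \<Rightarrow> real) \<Rightarrow> nat \<Rightarrow> real" where
  "vfield k \<xi> i = bcoef k \<xi> i - bcoef k \<xi> (i + 1)"

definition critical_point :: "nat \<Rightarrow> (nat \<Rightarrow> real) \<Rightarrow> bool" where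
  "critical_point k \<xi> \<longleftrightarrow> (\<forall>i\<in>{1..k}. vfield k \<xi> i = 0)"

definition tint :: "ereal \<Rightarrow> real set" where
  "tint T = {t. 0 \<le> t \<and> ereal t < T}"

definition is_solution :: "nat \<Rightarrow> ereal \<Rightarrow> (real \<Rightarrow> nat \<Rightarrow> real) \<Rightarrow> bool" where
  "is_solution k T \<xi> \<longleftrightarrow> 0 < T \<and>
     (\<forall>t\<in>tint T. \<forall>i\<in>{1..k}.
        ((\<lambda>s. \<xi> s i) has_real_derivative vfield k (\<xi> t) i) (at t within tint T))"

definition is_maximal_solution :: "nat \<Rightarrow> ereal \<Rightarrow> (real \<Rightarrow> nat \<Rightarrow> real) \<Rightarrow> bool" where
  "is_maximal_solution k T \<xi> \<longleftrightarrow> is_solution k T \<xi> \<and>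
     \<not> (\<exists>T' \<eta>. T < T' \<and> is_solution k T' \<eta> \<and>
            (\<forall>t\<in>tint T. \<forall>i\<in>{1..k}. \<eta> t i = \<xi> t i))"

definition Bmax :: "nat \<Rightarrow> (nat \<Rightarrow> real) \<Rightarrow> real" where
  "Bmax k \<xi> = Max ((\<lambda>i. bcoef k \<xi> i) ` {1..k+1})"

definition bmin :: "nat \<Rightarrow> (nat \<Rightarrow> real) \<Rightarrow> real" where
  "bmin k \<xi> = Min ((\<lambda>i. bcoef k \<xi> i) ` {1..k+1})"

end

(*
  Along a solution the coefficients satisfy a discrete heat equation
  b_i' = c_i (b_(i+1) - 2 b_i + b_(i-1)) with c_i = sigma_(i-1) e^(-(xi_i - xi_(i-1))) > 0 for
  2 <= i <= k and b_1 = b_(k+1) = 0.  By the maximum principle the largest b_i cannot increase and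
  the smallest cannot decrease.  If B - b fails to decrease strictly on some [s, t], both B and b
  are constant there; at an interior time the least index realising a positive maximum would have
  strictly negative Laplacian, hence strictly negative derivative, contradicting constancy of the
  maximum.  So B <= 0 <= b there, i.e. all b_i vanish at that time.  They then vanish at later
  times by monotonicity and at earlier times by a Gronwall estimate for the energy sum b_i^2.
  Vanishing b means xi is constant in i, and since sum xi_i is conserved, xi = 0.
  For part (a): at a critical point b_i = b_(i+1) for all i and b_1 = 0, so again all b_i vanish.
*)

theory Submission
  imports Defs
begin

section \<open>Monotonicity of the maximum of a finite family of functions\<close>

lemma continuous_on_Max_image:
  fixes f :: "'i \<Rightarrow> 'a::topological_space \<Rightarrow> 'b::linorder_topology"
  assumes "finite J" "J \<noteq> {}" "\<And>j. j \<in> J \<Longrightarrow> continuous_on S (f j)"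
  shows "continuous_on S (\<lambda>x. Max ((\<lambda>j. f j x) ` J))"
  using assms
proof (induction J rule: finite_ne_induct)
  case (insert j J)
  then show ?case by (auto intro!: continuous_on_max)
qed simp

text \<open>If \<open>M t > M s\<close>, let \<open>c\<close> be the last point of \<open>[s, t]\<close> where \<open>M\<close> lies below the line
  through \<open>(s, M s)\<close> with half the mean slope; the right Dini bound at \<open>c\<close> keeps \<open>M\<close> below
  that line a little beyond \<open>c\<close>.\<close>

lemma nonincreasing_if_right_Dini_nonpos:
  fixes M :: "real \<Rightarrow> real"
  assumes "s \<le> t" and cont: "continuous_on {s..t} M"
    and right: "\<And>c \<delta>. c \<in> {s..<t} \<Longrightarrow> 0 < \<delta> \<Longrightarrow>
                  eventually (\<lambda>y. M y \<le> M c + \<delta> * (y - c)) (at_right c)"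
  shows "M t \<le> M s"
proof (rule ccontr)
  assume increase: "\<not> M t \<le> M s"
  then have "s < t" using \<open>s \<le> t\<close> by (cases "s = t") auto
  define \<delta> where "\<delta> = (M t - M s) / (2 * (t - s))"
  define g where "g \<tau> = M s + \<delta> * (\<tau> - s)" for \<tau>
  have "0 < \<delta>" using increase \<open>s < t\<close> by (simp add: \<delta>_def)
  have "\<delta> * (t - s) = (M t - M s) / 2"
    using \<open>s < t\<close> by (simp add: \<delta>_def field_simps)
  then have "g t < M t" using increase by (simp add: g_def)
  define S where "S = {s..t} \<inter> (\<lambda>\<tau>. M \<tau> - g \<tau>) -` {..0}"
  have "closed S"
    unfolding S_def g_def using cont
    by (intro continuous_closed_preimage continuous_intros) auto
  moreover have "s \<in> S" "bdd_above S"
    using \<open>s \<le> t\<close> by (auto simp: S_def g_def intro: bdd_aboveI[of _ t])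
  ultimately have "Sup S \<in> S" by (intro closed_contains_Sup) auto
  define c where "c = Sup S"
  have "c \<in> S" using \<open>Sup S \<in> S\<close> by (simp add: c_def)
  then have "c < t" using \<open>g t < M t\<close> by (cases "c = t") (auto simp: S_def)
  then have "c \<in> {s..<t}" using \<open>c \<in> S\<close> by (simp add: S_def)
  have "eventually (\<lambda>y. c < y \<and> y < t) (at_right c)"
    using \<open>c < t\<close> unfolding eventually_at_right_field by blast
  then have "eventually (\<lambda>y. M y \<le> M c + \<delta> * (y - c) \<and> c < y \<and> y < t) (at_right c)"
    using right[OF \<open>c \<in> {s..<t}\<close> \<open>0 < \<delta>\<close>] by (auto intro: eventually_conj)
  then obtain y where y: "M y \<le> M c + \<delta> * (y - c)" "c < y" "y < t"
    using eventually_happens trivial_limit_at_right_real by blast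
  have "M y \<le> g y"
    using y(1) \<open>c \<in> S\<close> by (simp add: S_def g_def algebra_simps)
  then have "y \<in> S" using y \<open>c \<in> S\<close> by (simp add: S_def)
  then show False
    using y(2) \<open>bdd_above S\<close> cSup_upper by (fastforce simp: c_def)
qed

lemma eventually_below_right_secant:
  fixes f :: "real \<Rightarrow> real"
  assumes cont: "continuous (at_right c) f" and "f c \<le> a" and "0 < \<delta>"
    and deriv: "f c = a \<Longrightarrow> \<exists>D\<le>0. (f has_real_derivative D) (at_right c)"
  shows "eventually (\<lambda>y. f y \<le> a + \<delta> * (y - c)) (at_right c)"
proof (cases "f c < a")
  case True
  have "(f \<longlongrightarrow> f c) (at_right c)"
    using cont by (simp add: continuous_within)
  then have "eventually (\<lambda>y. f y < a) (at_right c)"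
    using True by (rule order_tendstoD)
  with eventually_at_right_less show ?thesis
  proof eventually_elim
    case (elim y)
    then show ?case using \<open>0 < \<delta>\<close> by (smt (verit) mult_pos_pos)
  qed
next
  case False
  with \<open>f c \<le> a\<close> have "f c = a" by simp
  then obtain D where "D \<le> 0" and "(f has_real_derivative D) (at_right c)"
    using deriv by blast
  then have "((\<lambda>y. (f y - f c) / (y - c)) \<longlongrightarrow> D) (at_right c)"
    by (simp add: has_field_derivative_iff)
  then have "eventually (\<lambda>y. (f y - f c) / (y - c) < \<delta>) (at_right c)"
    using \<open>D \<le> 0\<close> \<open>0 < \<delta>\<close> by (elim order_tendstoD(2)) auto
  with eventually_at_right_less show ?thesis
  proof eventually_elim
    case (elim y)
    then show ?case using \<open>f c = a\<close> by (simp add: pos_divide_less_eq algebra_simps)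
  qed
qed

lemma Max_image_nonincreasing:
  fixes f :: "'i \<Rightarrow> real \<Rightarrow> real"
  assumes "finite J" "J \<noteq> {}" "s \<le> t"
    and cont: "\<And>j. j \<in> J \<Longrightarrow> continuous_on {s..t} (f j)"
    and deriv: "\<And>j \<tau>. j \<in> J \<Longrightarrow> \<tau> \<in> {s..<t} \<Longrightarrow> f j \<tau> = Max ((\<lambda>i. f i \<tau>) ` J) \<Longrightarrow>
                  \<exists>D\<le>0. (f j has_real_derivative D) (at \<tau> within {s..t})"
  shows "Max ((\<lambda>j. f j t) ` J) \<le> Max ((\<lambda>j. f j s) ` J)"
proof (rule nonincreasing_if_right_Dini_nonpos[where M = "\<lambda>\<tau>. Max ((\<lambda>j. f j \<tau>) ` J)"])
  show "continuous_on {s..t} (\<lambda>\<tau>. Max ((\<lambda>j. f j \<tau>) ` J))"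
    using assms by (intro continuous_on_Max_image)
next
  fix c \<delta> :: real
  assume c: "c \<in> {s..<t}" and "0 < \<delta>"
  have right: "at c within {c..t} = at_right c"
    using c by (intro at_within_Icc_at_right) auto
  have "eventually (\<lambda>y. f j y \<le> Max ((\<lambda>i. f i c) ` J) + \<delta> * (y - c)) (at_right c)"
    if "j \<in> J" for j
  proof (rule eventually_below_right_secant)
    show "continuous (at_right c) (f j)"
    proof -
      have "continuous_on {c..t} (f j)"
        using cont[OF \<open>j \<in> J\<close>] by (rule continuous_on_subset) (use c in auto)
      then show ?thesis
        using c unfolding right[symmetric] by (simp add: continuous_on_eq_continuous_within)
    qed
    show "f j c \<le> Max ((\<lambda>i. f i c) ` J)"
      using \<open>j \<in> J\<close> \<open>finite J\<close> by (intro Max_ge) auto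
    show "\<exists>D\<le>0. (f j has_real_derivative D) (at_right c)"
      if attained: "f j c = Max ((\<lambda>i. f i c) ` J)"
    proof -
      obtain D where "D \<le> 0" "(f j has_real_derivative D) (at c within {s..t})"
        using deriv[OF \<open>j \<in> J\<close> c attained] by blast
      moreover have "{c..t} \<subseteq> {s..t}" using c by auto
      ultimately show ?thesis
        unfolding right[symmetric] by (blast intro: DERIV_subset)
    qed
  qed fact
  then have "eventually (\<lambda>y. \<forall>j\<in>J. f j y \<le> Max ((\<lambda>i. f i c) ` J) + \<delta> * (y - c)) (at_right c)"
    using \<open>finite J\<close> by (simp add: eventually_ball_finite)
  then show "eventually (\<lambda>y. Max ((\<lambda>j. f j y) ` J) \<le> Max ((\<lambda>j. f j c) ` J) + \<delta> * (y - c))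
               (at_right c)"
    by eventually_elim (use assms in auto)
qed fact

lemma vanishing_backward_if_deriv_ge:
  fixes E E' :: "real \<Rightarrow> real"
  assumes "y \<le> \<tau>"
    and deriv: "\<And>x. x \<in> {y..\<tau>} \<Longrightarrow> (E has_real_derivative E' x) (at x within {y..\<tau>})"
    and growth: "\<And>x. x \<in> {y..\<tau>} \<Longrightarrow> - C * E x \<le> E' x"
    and "0 \<le> E y" "E \<tau> = 0"
  shows "E y = 0"
proof -
  define h where "h x = E x * exp (C * x)" for x
  have dh: "(h has_real_derivative (E' x + C * E x) * exp (C * x)) (at x within {y..\<tau>})"
    if "x \<in> {y..\<tau>}" for x
    unfolding h_def by (auto intro!: derivative_eq_intros deriv[OF that] simp: algebra_simps)
  have "h y \<le> h \<tau>"
  proof (rule DERIV_nonneg_imp_increasing_open[OF \<open>y \<le> \<tau>\<close>])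
    fix x assume "y < x" "x < \<tau>"
    then show "\<exists>D. (h has_real_derivative D) (at x) \<and> 0 \<le> D"
      using dh[of x] growth[of x] at_within_Icc_at[of y x \<tau>] by auto
  next
    show "continuous_on {y..\<tau>} h"
      using dh by (rule DERIV_continuous_on)
  qed
  then have "E y * exp (C * y) \<le> 0"
    using \<open>E \<tau> = 0\<close> by (simp add: h_def)
  then show ?thesis
    using \<open>0 \<le> E y\<close> by (simp add: mult_le_0_iff)
qed

section \<open>Discrete heat flows\<close>

definition discrete_laplacian :: "(nat \<Rightarrow> real) \<Rightarrow> nat \<Rightarrow> real" where
  "discrete_laplacian v i = v (Suc i) - 2 * v i + v (i - 1)"

lemma discrete_laplacian_neg_at_least_argmax:
  fixes v :: "nat \<Rightarrow> real"
  assumes j: "j = (LEAST j. j \<in> {1..n+1} \<and> v j = Max (v ` {1..n+1}))" and "j \<in> {2..n}"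
  shows "discrete_laplacian v j < 0"
proof -
  have "Suc j \<in> {1..n+1}" "j - 1 \<in> {1..n+1}" using \<open>j \<in> {2..n}\<close> by auto
  then have "v (Suc j) \<le> Max (v ` {1..n+1})" "v (j - 1) \<le> Max (v ` {1..n+1})"
    by (simp_all add: Max_ge)
  moreover have "v j = Max (v ` {1..n+1})"
  proof -
    have "Max (v ` {1..n+1}) \<in> v ` {1..n+1}" by (intro Max_in) auto
    then obtain j0 where "j0 \<in> {1..n+1} \<and> v j0 = Max (v ` {1..n+1})" by (metis imageE)
    then show ?thesis unfolding j by (rule LeastI2) simp
  qed
  moreover have "v (j - 1) \<noteq> Max (v ` {1..n+1})"
  proof
    assume "v (j - 1) = Max (v ` {1..n+1})"
    with \<open>j - 1 \<in> {1..n+1}\<close> have "j \<le> j - 1" unfolding j by (blast intro: Least_le)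
    with \<open>j \<in> {2..n}\<close> show False by auto
  qed
  ultimately show ?thesis unfolding discrete_laplacian_def by linarith
qed

locale discrete_heat_flow =
  fixes n :: nat and I :: "real set" and u w :: "real \<Rightarrow> nat \<Rightarrow> real"
  assumes interval: "is_interval I"
    and support: "\<And>\<tau> i. i \<notin> {2..n} \<Longrightarrow> u \<tau> i = 0"
    and weight_pos: "\<And>\<tau> i. i \<in> {2..n} \<Longrightarrow> 0 < w \<tau> i"
    and deriv: "\<And>\<tau> i. \<tau> \<in> I \<Longrightarrow> i \<in> {2..n} \<Longrightarrow>
      ((\<lambda>\<sigma>. u \<sigma> i) has_real_derivative w \<tau> i * discrete_laplacian (u \<tau>) i) (at \<tau> within I)"
begin

abbreviation umax :: "real \<Rightarrow> real" where
  "umax \<tau> \<equiv> Max ((\<lambda>i. u \<tau> i) ` {1..n+1})"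

abbreviation umin :: "real \<Rightarrow> real" where
  "umin \<tau> \<equiv> Min ((\<lambda>i. u \<tau> i) ` {1..n+1})"

lemma negated_flow: "discrete_heat_flow n I (\<lambda>\<tau> i. - u \<tau> i) w"
proof
  fix \<tau> i assume "\<tau> \<in> I" "i \<in> {2..n}"
  then show "((\<lambda>\<sigma>. - u \<sigma> i) has_real_derivative
               w \<tau> i * discrete_laplacian (\<lambda>i. - u \<tau> i) i) (at \<tau> within I)"
    using DERIV_minus[OF deriv] by (simp add: discrete_laplacian_def algebra_simps)
qed (use interval support weight_pos in auto)

lemma Icc_subset:
  assumes "s \<in> I" "t \<in> I"
  shows "{s..t} \<subseteq> I"
proof
  fix x assume "x \<in> {s..t}"
  then have "s \<le> x" "x \<le> t" by simp_all
  then show "x \<in> I"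
    using interval assms unfolding is_interval_1 by blast
qed

lemma at_within_eq_at:
  assumes "s \<in> I" "t \<in> I" "s < \<tau>" "\<tau> < t"
  shows "at \<tau> within I = at \<tau>"
proof (rule at_within_open_subset[of _ "{s<..<t}"])
  show "{s<..<t} \<subseteq> I" using Icc_subset[OF assms(1,2)] by auto
qed (use assms in auto)

lemma continuous_on_u: "continuous_on I (\<lambda>\<tau>. u \<tau> i)"
proof (cases "i \<in> {2..n}")
  case True
  then show ?thesis using deriv by (intro DERIV_continuous_on) blast
next
  case False
  then have "(\<lambda>\<tau>. u \<tau> i) = (\<lambda>\<tau>. 0)" using support by blast
  then show ?thesis by (metis continuous_on_const)
qed

lemma umax_ge: "i \<in> {1..n+1} \<Longrightarrow> u \<tau> i \<le> umax \<tau>"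
  by (rule Max_ge) auto

lemma umin_le: "i \<in> {1..n+1} \<Longrightarrow> umin \<tau> \<le> u \<tau> i"
  by (rule Min_le) auto

lemma umax_nonincreasing:
  assumes "s \<in> I" "t \<in> I" "s \<le> t"
  shows "umax t \<le> umax s"
proof (rule Max_image_nonincreasing[where f = "\<lambda>j \<tau>. u \<tau> j"])
  fix j assume "j \<in> {1..n+1}"
  show "continuous_on {s..t} (\<lambda>\<tau>. u \<tau> j)"
    using continuous_on_u Icc_subset[OF assms(1,2)] by (rule continuous_on_subset)
  fix \<tau> assume "\<tau> \<in> {s..<t}" and attained: "u \<tau> j = umax \<tau>"
  show "\<exists>D\<le>0. ((\<lambda>\<tau>. u \<tau> j) has_real_derivative D) (at \<tau> within {s..t})"
  proof (cases "j \<in> {2..n}")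
    case True
    have "\<tau> \<in> I" using \<open>\<tau> \<in> {s..<t}\<close> Icc_subset[OF assms(1,2)] by auto
    have "Suc j \<in> {1..n+1}" "j - 1 \<in> {1..n+1}" using True by auto
    then have "u \<tau> (Suc j) \<le> umax \<tau>" "u \<tau> (j - 1) \<le> umax \<tau>"
      by (blast intro: umax_ge)+
    then have "u \<tau> (Suc j) \<le> u \<tau> j" "u \<tau> (j - 1) \<le> u \<tau> j"
      using attained by linarith+
    moreover have "0 < w \<tau> j" using weight_pos[OF True] .
    ultimately have "w \<tau> j * discrete_laplacian (u \<tau>) j \<le> 0"
      by (intro mult_nonneg_nonpos) (auto simp: discrete_laplacian_def)
    moreover have "((\<lambda>\<tau>. u \<tau> j) has_real_derivative w \<tau> j * discrete_laplacian (u \<tau>) j)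
                     (at \<tau> within {s..t})"
      using deriv[OF \<open>\<tau> \<in> I\<close> True] Icc_subset[OF assms(1,2)] by (rule DERIV_subset)
    ultimately show ?thesis by blast
  next
    case False
    then have "(\<lambda>\<tau>. u \<tau> j) = (\<lambda>\<tau>. 0)" by (simp add: support)
    then show ?thesis by (auto intro: DERIV_const)
  qed
qed (use assms in auto)

lemma Max_uminus_eq: "Max ((\<lambda>i. - u \<tau> i) ` {1..n+1}) = - umin \<tau>"
  by (subst minus_Min_eq_Max) (auto simp: image_image)

lemma umin_nondecreasing:
  assumes "s \<in> I" "t \<in> I" "s \<le> t"
  shows "umin s \<le> umin t"
proof -
  interpret neg: discrete_heat_flow n I "\<lambda>\<tau> i. - u \<tau> i" w by (rule negated_flow)
  show ?thesis using neg.umax_nonincreasing[OF assms] by (simp only: Max_uminus_eq)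
qed

text \<open>A positive maximum is attained at some index in \<open>{2..n}\<close>; at the least such index the
  Laplacian is negative, so the time derivative is negative there, which is impossible at an
  interior time where the maximum is constant.\<close>

lemma umax_nonpos_if_constant:
  assumes "s \<in> I" "t \<in> I" "s < \<tau>" "\<tau> < t"
    and const: "\<And>y. y \<in> {s..t} \<Longrightarrow> umax y = umax \<tau>"
  shows "umax \<tau> \<le> 0"
proof (rule ccontr)
  assume pos: "\<not> umax \<tau> \<le> 0"
  define j where "j = (LEAST j. j \<in> {1..n+1} \<and> u \<tau> j = umax \<tau>)"
  have "umax \<tau> \<in> (\<lambda>i. u \<tau> i) ` {1..n+1}" by (intro Max_in) auto
  then obtain j0 where "j0 \<in> {1..n+1} \<and> u \<tau> j0 = umax \<tau>" by (metis imageE)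
  then have "j \<in> {1..n+1} \<and> u \<tau> j = umax \<tau>"
    unfolding j_def by (rule LeastI)
  then have j: "j \<in> {1..n+1}" "u \<tau> j = umax \<tau>" by blast+
  have "j \<in> {2..n}"
  proof (rule ccontr)
    assume "j \<notin> {2..n}"
    then have "u \<tau> j = 0" by (rule support)
    with j(2) pos show False by simp
  qed
  have "\<tau> \<in> I" using Icc_subset[OF assms(1,2)] assms(3,4) by auto
  have "((\<lambda>\<sigma>. u \<sigma> j) has_real_derivative w \<tau> j * discrete_laplacian (u \<tau>) j) (at \<tau>)"
    using deriv[OF \<open>\<tau> \<in> I\<close> \<open>j \<in> {2..n}\<close>] at_within_eq_at[OF assms(1-4)] by simp
  moreover have "0 < min (\<tau> - s) (t - \<tau>)" using assms(3,4) by simp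
  moreover have "\<forall>y. \<bar>\<tau> - y\<bar> < min (\<tau> - s) (t - \<tau>) \<longrightarrow> u y j \<le> u \<tau> j"
  proof (intro allI impI)
    fix y assume "\<bar>\<tau> - y\<bar> < min (\<tau> - s) (t - \<tau>)"
    then have "y \<in> {s..t}" by auto
    then show "u y j \<le> u \<tau> j" using umax_ge[OF j(1), of y] const[of y] j(2) by linarith
  qed
  ultimately have "w \<tau> j * discrete_laplacian (u \<tau>) j = 0"
    by (rule DERIV_local_max)
  moreover have "discrete_laplacian (u \<tau>) j < 0"
    using j_def \<open>j \<in> {2..n}\<close> by (rule discrete_laplacian_neg_at_least_argmax)
  ultimately show False using weight_pos[OF \<open>j \<in> {2..n}\<close>, of \<tau>] by simp
qed

lemma umin_nonneg_if_constant:
  assumes "s \<in> I" "t \<in> I" "s < \<tau>" "\<tau> < t"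
    and const: "\<And>y. y \<in> {s..t} \<Longrightarrow> umin y = umin \<tau>"
  shows "0 \<le> umin \<tau>"
proof -
  interpret neg: discrete_heat_flow n I "\<lambda>\<tau> i. - u \<tau> i" w by (rule negated_flow)
  have "Max ((\<lambda>i. - u y i) ` {1..n+1}) = Max ((\<lambda>i. - u \<tau> i) ` {1..n+1})"
    if "y \<in> {s..t}" for y
    using const[OF that] by (simp only: Max_uminus_eq)
  then have "Max ((\<lambda>i. - u \<tau> i) ` {1..n+1}) \<le> 0"
    by (rule neg.umax_nonpos_if_constant[OF assms(1-4)])
  then show ?thesis unfolding Max_uminus_eq by linarith
qed

lemma vanishing_if_umax_nonpos_umin_nonneg:
  assumes "umax \<tau> \<le> 0" "0 \<le> umin \<tau>"
  shows "u \<tau> i = 0"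
proof (cases "i \<in> {1..n+1}")
  case True
  then show ?thesis using assms umax_ge[OF True, of \<tau>] umin_le[OF True, of \<tau>] by linarith
next
  case False
  then have "i \<notin> {2..n}" by auto
  then show ?thesis by (rule support)
qed

definition energy :: "real \<Rightarrow> real" where
  "energy \<tau> = (\<Sum>i\<in>{2..n}. (u \<tau> i)\<^sup>2)"

lemma energy_nonneg: "0 \<le> energy \<tau>"
  by (simp add: energy_def sum_nonneg)

lemma square_le_energy: "(u \<tau> i)\<^sup>2 \<le> energy \<tau>"
  by (cases "i \<in> {2..n}") (auto simp: energy_def support intro: member_le_sum sum_nonneg)

lemma energy_has_derivative:
  assumes "\<tau> \<in> I"
  shows "(energy has_real_derivative
           (\<Sum>i\<in>{2..n}. 2 * u \<tau> i * (w \<tau> i * discrete_laplacian (u \<tau>) i))) (at \<tau> within I)"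
  unfolding energy_def[abs_def]
  by (intro DERIV_sum) (auto intro!: derivative_eq_intros deriv[OF assms])

lemma energy_growth_term_lower:
  assumes "0 < w \<tau> i" "w \<tau> i \<le> L"
  shows "- (8 * L * energy \<tau>) \<le> 2 * u \<tau> i * (w \<tau> i * discrete_laplacian (u \<tau>) i)"
proof -
  let ?a = "u \<tau> i" and ?p = "u \<tau> (Suc i)" and ?q = "u \<tau> (i - 1)"
  have "2 * ?a * discrete_laplacian (u \<tau>) i + (6 * ?a\<^sup>2 + ?p\<^sup>2 + ?q\<^sup>2)
          = (?a + ?p)\<^sup>2 + (?a + ?q)\<^sup>2"
    by (simp add: discrete_laplacian_def power2_eq_square algebra_simps)
  then have lower: "- (8 * energy \<tau>) \<le> 2 * ?a * discrete_laplacian (u \<tau>) i"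
    using square_le_energy[of \<tau> i] square_le_energy[of \<tau> "Suc i"] square_le_energy[of \<tau> "i - 1"]
      zero_le_power2[of "?a + ?p"] zero_le_power2[of "?a + ?q"] by linarith
  have "- (8 * L * energy \<tau>) = L * - (8 * energy \<tau>)" by simp
  also have "\<dots> \<le> w \<tau> i * - (8 * energy \<tau>)"
    using assms(2) energy_nonneg by (intro mult_right_mono_neg) auto
  also have "\<dots> \<le> w \<tau> i * (2 * ?a * discrete_laplacian (u \<tau>) i)"
    using lower assms(1) by (intro mult_left_mono) auto
  finally show ?thesis by (simp add: algebra_simps)
qed

lemma vanishing_backward:
  assumes bound: "\<And>x i. x \<in> I \<Longrightarrow> i \<in> {2..n} \<Longrightarrow> w x i \<le> L"
    and "y \<in> I" "\<tau> \<in> I" "y \<le> \<tau>" and zero: "\<And>i. u \<tau> i = 0"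
  shows "u y i = 0"
proof -
  define C where "C = 8 * L * card {2..n}"
  have "{y..\<tau>} \<subseteq> I" using Icc_subset[OF assms(2,3)] .
  have "energy y = 0"
  proof (rule vanishing_backward_if_deriv_ge[where E = energy and C = C])
    fix x assume "x \<in> {y..\<tau>}"
    then have "x \<in> I" using \<open>{y..\<tau>} \<subseteq> I\<close> by blast
    let ?E' = "\<Sum>i\<in>{2..n}. 2 * u x i * (w x i * discrete_laplacian (u x) i)"
    show "(energy has_real_derivative ?E') (at x within {y..\<tau>})"
      using energy_has_derivative[OF \<open>x \<in> I\<close>] \<open>{y..\<tau>} \<subseteq> I\<close> by (rule DERIV_subset)
    have "(\<Sum>i\<in>{2..n}. - (8 * L * energy x)) \<le> ?E'"
      using weight_pos bound[OF \<open>x \<in> I\<close>] by (intro sum_mono energy_growth_term_lower)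
    then show "- C * energy x \<le> ?E'" by (simp add: C_def algebra_simps)
  qed (use \<open>y \<le> \<tau>\<close> energy_nonneg zero in \<open>simp_all add: energy_def\<close>)
  then show ?thesis using square_le_energy[of y i] by simp
qed

lemma constant_if_oscillation_not_decreasing:
  assumes "s \<in> I" "t \<in> I" "umax s - umin s \<le> umax t - umin t" "x \<in> {s..t}"
  shows "umax x = umax s" "umin x = umin s"
proof -
  have "x \<in> I" "s \<le> x" "x \<le> t" using Icc_subset[OF assms(1,2)] assms(4) by auto
  have "umax t \<le> umax x" "umin x \<le> umin t"
    using umax_nonincreasing umin_nondecreasing \<open>x \<in> I\<close> assms(2) \<open>x \<le> t\<close> by blast+
  moreover have "umax x \<le> umax s" "umin s \<le> umin x"
    using umax_nonincreasing umin_nondecreasing assms(1) \<open>x \<in> I\<close> \<open>s \<le> x\<close> by blast+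
  ultimately show "umax x = umax s" "umin x = umin s" using assms(3) by linarith+
qed

lemma vanishing_if_oscillation_not_decreasing:
  assumes bound: "\<And>x i. x \<in> I \<Longrightarrow> i \<in> {2..n} \<Longrightarrow> w x i \<le> L"
    and "s \<in> I" "t \<in> I" "s < t" "umax s - umin s \<le> umax t - umin t" and "y \<in> I"
  shows "u y i = 0"
proof -
  define \<tau> where "\<tau> = (s + t) / 2"
  have "s < \<tau>" "\<tau> < t" using \<open>s < t\<close> by (auto simp: \<tau>_def)
  then have "\<tau> \<in> I" using Icc_subset[OF assms(2,3)] by auto
  note const = constant_if_oscillation_not_decreasing[OF assms(2,3,5)]
  have "\<tau> \<in> {s..t}" using \<open>s < \<tau>\<close> \<open>\<tau> < t\<close> by simp
  have "umax \<tau> \<le> 0"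
    by (rule umax_nonpos_if_constant[OF assms(2,3) \<open>s < \<tau>\<close> \<open>\<tau> < t\<close>])
      (use const(1) \<open>\<tau> \<in> {s..t}\<close> in metis)
  have "0 \<le> umin \<tau>"
    by (rule umin_nonneg_if_constant[OF assms(2,3) \<open>s < \<tau>\<close> \<open>\<tau> < t\<close>])
      (use const(2) \<open>\<tau> \<in> {s..t}\<close> in metis)
  show ?thesis
  proof (cases "y \<le> \<tau>")
    case True
    have "u \<tau> j = 0" for j
      using \<open>umax \<tau> \<le> 0\<close> \<open>0 \<le> umin \<tau>\<close> by (rule vanishing_if_umax_nonpos_umin_nonneg)
    then show ?thesis using vanishing_backward[OF bound \<open>y \<in> I\<close> \<open>\<tau> \<in> I\<close> True] by blast
  next
    case False
    then have "\<tau> \<le> y" by simp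
    then have "umax y \<le> umax \<tau>" "umin \<tau> \<le> umin y"
      using umax_nonincreasing umin_nondecreasing \<open>\<tau> \<in> I\<close> \<open>y \<in> I\<close> by blast+
    then have "umax y \<le> 0" "0 \<le> umin y"
      using \<open>umax \<tau> \<le> 0\<close> \<open>0 \<le> umin \<tau>\<close> by linarith+
    then show ?thesis by (rule vanishing_if_umax_nonpos_umin_nonneg)
  qed
qed

end

section \<open>The system for the coefficients \<open>b\<^sub>i\<close>\<close>

definition bweight :: "nat \<Rightarrow> (nat \<Rightarrow> real) \<Rightarrow> nat \<Rightarrow> real" where
  "bweight k x i = (if 2 \<le> i \<and> i \<le> k then sigma k (i - 1) * exp (- (x i - x (i - 1))) else 0)"

lemma sigma_pos: "1 \<le> i \<Longrightarrow> i < k \<Longrightarrow> 0 < sigma k i"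
  unfolding sigma_def by simp

lemma sigma_le_square:
  assumes "i \<le> k"
  shows "sigma k i \<le> real k * real k"
proof -
  have "real i * (real k - real i) \<le> real k * real k"
    using assms by (intro mult_mono) auto
  moreover have "0 \<le> real k * real k" by simp
  ultimately show ?thesis unfolding sigma_def by linarith
qed

lemma tint_is_interval: "is_interval (tint T)"
  unfolding is_interval_1
proof (intro ballI allI impI)
  fix a b x assume "a \<in> tint T" "b \<in> tint T" "a \<le> x \<and> x \<le> b"
  then have "0 \<le> x" "ereal x \<le> ereal b" "ereal b < T" by (simp_all add: tint_def)
  then show "x \<in> tint T"
    unfolding tint_def using order.strict_trans1[of "ereal x" "ereal b" T] by simp
qed

lemma zero_in_tint: "is_solution k T \<xi> \<Longrightarrow> 0 \<in> tint T"
  unfolding is_solution_def tint_def by (simp add: zero_ereal_def)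

lemma bcoef_heat_flow:
  assumes sol: "is_solution k T \<xi>"
  shows "discrete_heat_flow k (tint T) (\<lambda>\<tau>. bcoef k (\<xi> \<tau>)) (\<lambda>\<tau>. bweight k (\<xi> \<tau>))"
proof
  fix \<tau> i assume "\<tau> \<in> tint T" "i \<in> {2..k}"
  have "((\<lambda>s. \<xi> s j) has_real_derivative vfield k (\<xi> \<tau>) j) (at \<tau> within tint T)"
    if "j \<in> {1..k}" for j
    using sol that \<open>\<tau> \<in> tint T\<close> unfolding is_solution_def by blast
  moreover have "i \<in> {1..k}" "i - 1 \<in> {1..k}" using \<open>i \<in> {2..k}\<close> by auto
  ultimately have "((\<lambda>s. sigma k (i - 1) * (exp (- (\<xi> s i - \<xi> s (i - 1))) - 1)) has_real_derivative
      sigma k (i - 1) * (exp (- (\<xi> \<tau> i - \<xi> \<tau> (i - 1))) * - (vfield k (\<xi> \<tau>) i - vfield k (\<xi> \<tau>) (i - 1))))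
      (at \<tau> within tint T)"
    by (auto intro!: derivative_eq_intros)
  moreover have "(\<lambda>s. bcoef k (\<xi> s) i) = (\<lambda>s. sigma k (i - 1) * (exp (- (\<xi> s i - \<xi> s (i - 1))) - 1))"
    using \<open>i \<in> {2..k}\<close> by (simp add: bcoef_def)
  moreover have "Suc (i - 1) = i" using \<open>i \<in> {2..k}\<close> by simp
  ultimately show "((\<lambda>s. bcoef k (\<xi> s) i) has_real_derivative
      bweight k (\<xi> \<tau>) i * discrete_laplacian (bcoef k (\<xi> \<tau>)) i) (at \<tau> within tint T)"
    using \<open>i \<in> {2..k}\<close>
    by (simp add: bweight_def vfield_def discrete_laplacian_def algebra_simps)
qed (auto simp: tint_is_interval bcoef_def bweight_def sigma_pos)

lemma bweight_le_Bmax: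
  assumes "i \<in> {2..k}"
  shows "bweight k x i \<le> Bmax k x + real k * real k"
proof -
  have "bweight k x i = bcoef k x i + sigma k (i - 1)"
    using assms by (simp add: bweight_def bcoef_def algebra_simps)
  moreover have "bcoef k x i \<le> Bmax k x"
    unfolding Bmax_def using assms by (intro Max_ge) auto
  moreover have "sigma k (i - 1) \<le> real k * real k"
    using assms by (intro sigma_le_square) auto
  ultimately show ?thesis by linarith
qed

lemma sum_vfield_eq_0: "(\<Sum>i=1..k. vfield k x i) = 0"
proof -
  have "(\<Sum>i=1..k. vfield k x i) = - (\<Sum>i=1..k. bcoef k x (Suc i) - bcoef k x i)"
    by (simp add: vfield_def sum_negf[symmetric])
  also have "\<dots> = - (bcoef k x (Suc k) - bcoef k x 1)"
    using sum_Suc_diff[of 1 k "bcoef k x"] by simp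
  also have "\<dots> = 0" by (simp add: bcoef_def)
  finally show ?thesis .
qed

lemma solution_sum_constant:
  assumes sol: "is_solution k T \<xi>" and "t \<in> tint T"
  shows "(\<Sum>i=1..k. \<xi> t i) = (\<Sum>i=1..k. \<xi> 0 i)"
proof -
  have "\<exists>c. \<forall>x\<in>tint T. (\<Sum>i=1..k. \<xi> x i) = c"
  proof (rule has_field_derivative_zero_constant)
    show "convex (tint T)" using tint_is_interval by (simp add: is_interval_convex_1)
    fix x assume "x \<in> tint T"
    then have "((\<lambda>s. \<Sum>i=1..k. \<xi> s i) has_real_derivative (\<Sum>i=1..k. vfield k (\<xi> x) i))
                 (at x within tint T)"
      using sol unfolding is_solution_def by (intro DERIV_sum) auto
    then show "((\<lambda>s. \<Sum>i=1..k. \<xi> s i) has_real_derivative 0) (at x within tint T)"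
      by (simp only: sum_vfield_eq_0)
  qed
  moreover have "0 \<in> tint T" using sol by (rule zero_in_tint)
  ultimately show ?thesis using \<open>t \<in> tint T\<close> by metis
qed

lemma bcoef_zero_if_critical:
  assumes "critical_point k x"
  shows "bcoef k x i = 0"
proof (induction i)
  case (Suc i)
  show ?case
  proof (cases "i \<in> {1..k}")
    case True
    then have "vfield k x i = 0" using assms by (simp add: critical_point_def)
    then show ?thesis using Suc.IH by (simp add: vfield_def)
  qed (auto simp: bcoef_def)
qed (simp add: bcoef_def)

lemma eq_first_if_bcoef_zero:
  assumes "\<And>i. bcoef k x i = 0"
  shows "i \<in> {1..k} \<Longrightarrow> x i = x 1"
proof (induction i)
  case (Suc i)
  show ?case
  proof (cases "i = 0")
    case False
    with Suc.prems have "2 \<le> Suc i" "Suc i \<le> k" by auto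
    then have "x (Suc i) = x i"
      using sigma_pos[of i k] assms[of "Suc i"] by (simp add: bcoef_def)
    then show ?thesis using Suc False by simp
  qed simp
qed simp

lemma zero_if_bcoef_zero:
  assumes "\<And>i. bcoef k x i = 0" and "(\<Sum>i=1..k. x i) = 0" and "i \<in> {1..k}"
  shows "x i = 0"
proof -
  have "(\<Sum>i=1..k. x i) = (\<Sum>i=1..k. x 1)"
    by (rule sum.cong[OF refl]) (rule eq_first_if_bcoef_zero[OF assms(1)])
  then have "real k * x 1 = 0" using assms(2) by simp
  then have "x 1 = 0" using assms(3) by simp
  then show ?thesis using eq_first_if_bcoef_zero[OF assms(1,3)] by linarith
qed

lemma Bmax_nonincreasing:
  assumes "is_solution k T \<xi>" "s \<in> tint T" "t \<in> tint T" "s \<le> t"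
  shows "Bmax k (\<xi> t) \<le> Bmax k (\<xi> s)"
proof -
  interpret discrete_heat_flow k "tint T" "\<lambda>\<tau>. bcoef k (\<xi> \<tau>)" "\<lambda>\<tau>. bweight k (\<xi> \<tau>)"
    using assms(1) by (rule bcoef_heat_flow)
  show ?thesis unfolding Bmax_def using assms(2-4) by (rule umax_nonincreasing)
qed

lemma bmin_nondecreasing:
  assumes "is_solution k T \<xi>" "s \<in> tint T" "t \<in> tint T" "s \<le> t"
  shows "bmin k (\<xi> s) \<le> bmin k (\<xi> t)"
proof -
  interpret discrete_heat_flow k "tint T" "\<lambda>\<tau>. bcoef k (\<xi> \<tau>)" "\<lambda>\<tau>. bweight k (\<xi> \<tau>)"
    using assms(1) by (rule bcoef_heat_flow)
  show ?thesis unfolding bmin_def using assms(2-4) by (rule umin_nondecreasing)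
qed

lemma bweight_bounded:
  assumes sol: "is_solution k T \<xi>" and "x \<in> tint T" "i \<in> {2..k}"
  shows "bweight k (\<xi> x) i \<le> Bmax k (\<xi> 0) + real k * real k"
proof -
  have "Bmax k (\<xi> x) \<le> Bmax k (\<xi> 0)"
    using sol zero_in_tint[OF sol] \<open>x \<in> tint T\<close>
    by (rule Bmax_nonincreasing) (use \<open>x \<in> tint T\<close> in \<open>simp add: tint_def\<close>)
  then show ?thesis using bweight_le_Bmax[OF \<open>i \<in> {2..k}\<close>, of "\<xi> x"] by linarith
qed

lemma solution_vanishing_if_oscillation_not_decreasing:
  assumes sol: "is_solution k T \<xi>" and sum0: "(\<Sum>i=1..k. \<xi> 0 i) = 0"
    and "s \<in> tint T" "t \<in> tint T" "s < t"
    and osc: "Bmax k (\<xi> s) - bmin k (\<xi> s) \<le> Bmax k (\<xi> t) - bmin k (\<xi> t)"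
    and "y \<in> tint T" "i \<in> {1..k}"
  shows "\<xi> y i = 0"
proof -
  interpret heat: discrete_heat_flow k "tint T" "\<lambda>\<tau>. bcoef k (\<xi> \<tau>)" "\<lambda>\<tau>. bweight k (\<xi> \<tau>)"
    using sol by (rule bcoef_heat_flow)
  have "bcoef k (\<xi> y) j = 0" for j
    using heat.vanishing_if_oscillation_not_decreasing[OF bweight_bounded[OF sol]
        \<open>s \<in> tint T\<close> \<open>t \<in> tint T\<close> \<open>s < t\<close> osc[unfolded Bmax_def bmin_def] \<open>y \<in> tint T\<close>] .
  moreover have "(\<Sum>i=1..k. \<xi> y i) = 0"
    using solution_sum_constant[OF sol \<open>y \<in> tint T\<close>] sum0 by simp
  ultimately show "\<xi> y i = 0" using \<open>i \<in> {1..k}\<close> by (rule zero_if_bcoef_zero)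
qed

theorem proposition2p1:
  fixes k :: nat
  assumes "k \<ge> 2"
  shows "(\<forall>\<xi> :: nat \<Rightarrow> real. critical_point k \<xi> \<and> (\<Sum>i=1..k. \<xi> i) = 0
            \<longrightarrow> (\<forall>i\<in>{1..k}. \<xi> i = 0))
       \<and> (\<forall>(\<xi> :: real \<Rightarrow> nat \<Rightarrow> real) T.
            is_maximal_solution k T \<xi> \<and> (\<Sum>i=1..k. \<xi> 0 i) = 0 \<longrightarrow>
              (\<forall>s\<in>tint T. \<forall>t\<in>tint T. s \<le> t \<longrightarrow>
                  Bmax k (\<xi> t) \<le> Bmax k (\<xi> s) \<and> - bmin k (\<xi> t) \<le> - bmin k (\<xi> s))
            \<and> ((\<forall>t\<in>tint T. \<forall>i\<in>{1..k}. \<xi> t i = 0) \<or>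
               (\<forall>s\<in>tint T. \<forall>t\<in>tint T. s < t \<longrightarrow>
                  Bmax k (\<xi> t) - bmin k (\<xi> t) < Bmax k (\<xi> s) - bmin k (\<xi> s))))"
proof (intro conjI allI impI)
  fix x :: "nat \<Rightarrow> real"
  assume "critical_point k x \<and> (\<Sum>i=1..k. x i) = 0"
  then show "\<forall>i\<in>{1..k}. x i = 0"
    using bcoef_zero_if_critical zero_if_bcoef_zero by blast
next
  fix \<xi> :: "real \<Rightarrow> nat \<Rightarrow> real" and T
  assume "is_maximal_solution k T \<xi> \<and> (\<Sum>i=1..k. \<xi> 0 i) = 0"
  then have sol: "is_solution k T \<xi>" and sum0: "(\<Sum>i=1..k. \<xi> 0 i) = 0"
    by (auto simp: is_maximal_solution_def)
  show "\<forall>s\<in>tint T. \<forall>t\<in>tint T. s \<le> t \<longrightarrow>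
          Bmax k (\<xi> t) \<le> Bmax k (\<xi> s) \<and> - bmin k (\<xi> t) \<le> - bmin k (\<xi> s)"
    using Bmax_nonincreasing[OF sol] bmin_nondecreasing[OF sol] neg_le_iff_le by blast
  show "(\<forall>t\<in>tint T. \<forall>i\<in>{1..k}. \<xi> t i = 0) \<or>
        (\<forall>s\<in>tint T. \<forall>t\<in>tint T. s < t \<longrightarrow>
           Bmax k (\<xi> t) - bmin k (\<xi> t) < Bmax k (\<xi> s) - bmin k (\<xi> s))"
    using solution_vanishing_if_oscillation_not_decreasing[OF sol sum0] by (meson not_less)
qed

end
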